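(* Let $p$ be a stochastic choice function on $X$, $M\in\mathcal N$ and $i,j\in M$ distinct. If $p(\cdot,M)$ is not bounded in a cycle over the pair $(i,j)$, then every MSC $\langle Q,\nu\rangle$ rationalizing $p$ satisfies $q_{ij}(M)=0$.
   Context: $X$ is a finite set of alternatives; a menu is a nonempty subset of $X$, and $\mathcal N$ denotes the set of all menus. A stochastic choice function is a map $p:X\times\mathcal N\to[0,1]$ with $\sum_{i\in M}p(i,M)=1$ and $p(i,M)=0$ for $i\notin M$; $p(\cdot,M)$ denotes the row vector $(p(i,M))_{i\in M}$. For $M\in\mathcal N$ and $i,j\in M$ let $\delta_{ij}(M)=p(i,M)\,p(j,\{i,j\})-p(i,\{i,j\})\,p(j,M)$. An MSC (Markov stochastic choice model) $\langle Q,\nu\rangle$ consists of, for every menu $M$, a matrix $Q(M)=(q_{ij}(M))_{i,j\in M}$ with nonnegative entries and a probability distribution $\nu_M$ on $M$, such that for all $M\in\mathcal N$ and distinct $i,j\in M$: (A1) $q_{ii}(M)=1-\sum_{k\neq i}q_{ik}(M)>0$; (A2) if $q_{ij}(\{i,j\})=0$ then $q_{ji}(\{i,j\})>0$; (A3) $q_{ij}(\{i,j\})\,q_{ji}(M)=q_{ji}(\{i,j\})\,q_{ij}(M)$. For a right stochastic matrix $Q$ on $M$ and a distribution $\nu$ on $M$ define $\rho(\nu,Q)=\lim_{\alpha\to0^+}\sum_{t\ge0}\alpha(1-\alpha)^t\nu Q^t$ (the limit exists and satisfies $\rho(\nu,Q)(I-Q)=0$). $p$ is rationalized by the MSC $\langle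 Q,\nu\rangle$ if $p(\cdot,M)=\rho(\nu_M,Q(M))$ for every $M\in\mathcal N$. A cycle on a set $M'=\{i_1,\dots,i_n\}$ (distinct elements in some order) is the set of ordered pairs $\{(i_1,i_2),\dots,(i_{n-1},i_n),(i_n,i_1)\}$. $p(\cdot,M)$ is bounded in a cycle over the pair $(i,j)$ if either $\delta_{ij}(M)=0$, or there exist $M'\subseteq M$ and a cycle on $M'$ containing $(i,j)$ such that all $\delta_{kl}(M)$, $(k,l)$ in the cycle, are strictly positive, or all are strictly negative. *)

theory Defs
  imports Complex_Main
begin

definition menus :: "'a set \<Rightarrow> 'a set set" where
  "menus X = {M. M \<subseteq> X \<and> M \<noteq> {}}"

text \<open>Stochastic choice function p(i,M) on X (only values with i in X and M a menu matter).\<close>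
definition stoch_choice :: "'a set \<Rightarrow> ('a \<Rightarrow> 'a set \<Rightarrow> real) \<Rightarrow> bool" where
  "stoch_choice X p \<longleftrightarrow>
     (\<forall>M\<in>menus X. (\<forall>i\<in>X. 0 \<le> p i M \<and> p i M \<le> 1)
                 \<and> (\<Sum>i\<in>M. p i M) = 1
                 \<and> (\<forall>i\<in>X. i \<notin> M \<longrightarrow> p i M = 0))"

definition delta :: "('a \<Rightarrow> 'a set \<Rightarrow> real) \<Rightarrow> 'a set \<Rightarrow> 'a \<Rightarrow> 'a \<Rightarrow> real" where
  "delta p M i j = p i M * p j {i, j} - p i {i, j} * p j M"

fun qpow :: "'a set \<Rightarrow> ('a \<Rightarrow> 'a \<Rightarrow> real) \<Rightarrow> nat \<Rightarrow> 'a \<Rightarrow> 'a \<Rightarrow> real" where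
  "qpow M q 0 i j = (if i = j then 1 else 0)"
| "qpow M q (Suc t) i j = (\<Sum>k\<in>M. qpow M q t i k * q k j)"

text \<open>Markov stochastic choice model: Q M i j = q_ij(M), nu M i = nu_M(i).\<close>
definition MSC :: "'a set \<Rightarrow> ('a set \<Rightarrow> 'a \<Rightarrow> 'a \<Rightarrow> real) \<Rightarrow> ('a set \<Rightarrow> 'a \<Rightarrow> real) \<Rightarrow> bool" where
  "MSC X Q \<nu> \<longleftrightarrow>
     (\<forall>M\<in>menus X.
        (\<forall>i\<in>M. \<forall>j\<in>M. 0 \<le> Q M i j)
      \<and> (\<forall>i\<in>M. 0 \<le> \<nu> M i) \<and> (\<Sum>i\<in>M. \<nu> M i) = 1
      \<and> (\<forall>i\<in>M. Q M i i = 1 - (\<Sum>k\<in>M - {i}. Q M i k) \<and> Q M i i > 0)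
      \<and> (\<forall>i\<in>M. \<forall>j\<in>M. i \<noteq> j \<longrightarrow>
            (Q {i, j} i j = 0 \<longrightarrow> Q {i, j} j i > 0)
          \<and> Q {i, j} i j * Q M j i = Q {i, j} j i * Q M i j))"

text \<open>rho(nu_M, Q(M)) evaluated at j: the Abel limit of the distributions nu Q^t.\<close>
definition rho_tendsto :: "'a set \<Rightarrow> ('a \<Rightarrow> real) \<Rightarrow> ('a \<Rightarrow> 'a \<Rightarrow> real) \<Rightarrow> 'a \<Rightarrow> real \<Rightarrow> bool" where
  "rho_tendsto M \<nu> q j r \<longleftrightarrow>
     ((\<lambda>\<alpha>. \<Sum>t. \<alpha> * (1 - \<alpha>) ^ t * (\<Sum>i\<in>M. \<nu> i * qpow M q t i j)) \<longlongrightarrow> r) (at_right 0)"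

definition rationalizes :: "'a set \<Rightarrow> ('a \<Rightarrow> 'a set \<Rightarrow> real) \<Rightarrow> ('a set \<Rightarrow> 'a \<Rightarrow> 'a \<Rightarrow> real) \<Rightarrow> ('a set \<Rightarrow> 'a \<Rightarrow> real) \<Rightarrow> bool" where
  "rationalizes X p Q \<nu> \<longleftrightarrow>
     (\<forall>M\<in>menus X. \<forall>j\<in>M. rho_tendsto M (\<nu> M) (Q M) j (p j M))"

definition cycle_pairs :: "'a list \<Rightarrow> ('a \<times> 'a) set" where
  "cycle_pairs xs = {(xs ! k, xs ! ((k + 1) mod length xs)) | k. k < length xs}"

definition bounded_in_cycle :: "('a \<Rightarrow> 'a set \<Rightarrow> real) \<Rightarrow> 'a set \<Rightarrow> 'a \<Rightarrow> 'a \<Rightarrow> bool" where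
  "bounded_in_cycle p M i j \<longleftrightarrow>
     delta p M i j = 0 \<or>
     (\<exists>xs. xs \<noteq> [] \<and> distinct xs \<and> set xs \<subseteq> M \<and> (i, j) \<in> cycle_pairs xs \<and>
        ((\<forall>(k, l)\<in>cycle_pairs xs. delta p M k l > 0) \<or>
         (\<forall>(k, l)\<in>cycle_pairs xs. delta p M k l < 0)))"

end

theory Submission
  imports Defs "HOL-Library.Transitive_Closure_Table"
begin

text \<open>
  A rationalizing MSC makes p(-, M) the Abel limit of the chain nu_M Q(M)^t, hence a stationary
  distribution of Q(M). Stationarity on the binary menu {k, l} together with (A3) turns the net
  flow p(k, M) q_kl(M) - p(l, M) q_lk(M) into (q_kl(M) + q_lk(M)) delta_kl(M), and stationarity on
  M says that this net flow is a circulation. If q_ij(M) > 0, the circulation multiplied by the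
  sign of delta_ij(M) is positive on (i, j). No flow can leave the set of nodes reachable from j
  along positive edges, so i is reachable; this closes a cycle through (i, j) on which every
  delta_kl(M) has the sign of delta_ij(M).
\<close>

definition markov_distr :: "'a set \<Rightarrow> ('a \<Rightarrow> real) \<Rightarrow> ('a \<Rightarrow> 'a \<Rightarrow> real) \<Rightarrow> nat \<Rightarrow> 'a \<Rightarrow> real" where
  "markov_distr M \<nu> q t j = (\<Sum>i\<in>M. \<nu> i * qpow M q t i j)"

definition abel_mean :: "'a set \<Rightarrow> ('a \<Rightarrow> real) \<Rightarrow> ('a \<Rightarrow> 'a \<Rightarrow> real) \<Rightarrow> real \<Rightarrow> 'a \<Rightarrow> real" where
  "abel_mean M \<nu> q a j = (\<Sum>t. a * (1 - a) ^ t * markov_distr M \<nu> q t j)"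

locale markov_chain =
  fixes M :: "'a set" and q :: "'a \<Rightarrow> 'a \<Rightarrow> real" and \<nu> :: "'a \<Rightarrow> real"
  assumes finite_states: "finite M"
    and transition_nonneg: "\<And>k l. k \<in> M \<Longrightarrow> l \<in> M \<Longrightarrow> 0 \<le> q k l"
    and transition_row_sum: "\<And>k. k \<in> M \<Longrightarrow> (\<Sum>l\<in>M. q k l) = 1"
    and initial_nonneg: "\<And>i. i \<in> M \<Longrightarrow> 0 \<le> \<nu> i"
    and initial_sum: "(\<Sum>i\<in>M. \<nu> i) = 1"
begin

lemma qpow_nonneg: "j \<in> M \<Longrightarrow> 0 \<le> qpow M q t i j"
  by (induction t arbitrary: j) (auto intro!: sum_nonneg mult_nonneg_nonneg transition_nonneg)

lemma qpow_row_sum: "i \<in> M \<Longrightarrow> (\<Sum>j\<in>M. qpow M q t i j) = 1"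
proof (induction t)
  case 0
  then show ?case using finite_states by simp
next
  case (Suc t)
  have "(\<Sum>j\<in>M. qpow M q (Suc t) i j) = (\<Sum>k\<in>M. qpow M q t i k * (\<Sum>j\<in>M. q k j))"
    by (simp add: sum_distrib_left) (rule sum.swap)
  then show ?case using Suc by (simp add: transition_row_sum)
qed

lemma markov_distr_0: "j \<in> M \<Longrightarrow> markov_distr M \<nu> q 0 j = \<nu> j"
  using finite_states by (simp add: markov_distr_def if_distrib cong: if_cong)

lemma markov_distr_Suc: "markov_distr M \<nu> q (Suc t) j = (\<Sum>k\<in>M. markov_distr M \<nu> q t k * q k j)"
  by (simp add: markov_distr_def sum_distrib_left sum_distrib_right mult.assoc) (rule sum.swap)

lemma markov_distr_nonneg: "j \<in> M \<Longrightarrow> 0 \<le> markov_distr M \<nu> q t j"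
  unfolding markov_distr_def by (auto intro!: sum_nonneg mult_nonneg_nonneg initial_nonneg qpow_nonneg)

lemma markov_distr_sum: "(\<Sum>j\<in>M. markov_distr M \<nu> q t j) = 1"
proof -
  have "(\<Sum>j\<in>M. markov_distr M \<nu> q t j) = (\<Sum>i\<in>M. \<nu> i * (\<Sum>j\<in>M. qpow M q t i j))"
    by (simp add: markov_distr_def sum_distrib_left) (rule sum.swap)
  then show ?thesis by (simp add: qpow_row_sum initial_sum)
qed

lemma markov_distr_le_1: "j \<in> M \<Longrightarrow> markov_distr M \<nu> q t j \<le> 1"
  using member_le_sum[of j M "markov_distr M \<nu> q t"] finite_states
  by (simp add: markov_distr_nonneg markov_distr_sum)

lemma abel_summands_summable:
  assumes "0 < a" "a < 1" "j \<in> M"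
  shows "summable (\<lambda>t. a * (1 - a) ^ t * markov_distr M \<nu> q t j)"
proof (rule summable_comparison_test)
  show "\<exists>N. \<forall>t\<ge>N. norm (a * (1 - a) ^ t * markov_distr M \<nu> q t j) \<le> a * (1 - a) ^ t"
    using assms markov_distr_nonneg markov_distr_le_1 by (auto intro!: mult_left_le)
  show "summable (\<lambda>t. a * (1 - a) ^ t)"
    using assms by (intro summable_mult summable_geometric) auto
qed

lemma abel_mean_recurrence:
  assumes "0 < a" "a < 1" "j \<in> M"
  shows "abel_mean M \<nu> q a j = (1 - a) * (\<Sum>k\<in>M. abel_mean M \<nu> q a k * q k j) + a * \<nu> j"
proof -
  let ?u = "\<lambda>t k. a * (1 - a) ^ t * markov_distr M \<nu> q t k"
  have "(\<lambda>t. (1 - a) * (\<Sum>k\<in>M. ?u t k * q k j)) sums ((1 - a) * (\<Sum>k\<in>M. abel_mean M \<nu> q a k * q k j))"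
    unfolding abel_mean_def
    by (intro sums_mult sums_sum sums_mult2 summable_sums abel_summands_summable assms)
  moreover have "(\<lambda>t. (1 - a) * (\<Sum>k\<in>M. ?u t k * q k j)) = (\<lambda>t. ?u (Suc t) j)"
    by (simp add: markov_distr_Suc sum_distrib_left mult_ac)
  ultimately have "(\<lambda>t. ?u t j) sums ((1 - a) * (\<Sum>k\<in>M. abel_mean M \<nu> q a k * q k j) + ?u 0 j)"
    using sums_Suc_iff[of "\<lambda>t. ?u t j"] by simp
  moreover have "(\<lambda>t. ?u t j) sums abel_mean M \<nu> q a j"
    unfolding abel_mean_def using abel_summands_summable[OF assms] by (rule summable_sums)
  ultimately show ?thesis using markov_distr_0[OF assms(3)] sums_unique2 by fastforce
qed

lemma abel_limit_stationary:
  assumes lim: "\<And>k. k \<in> M \<Longrightarrow> rho_tendsto M \<nu> q k (r k)" and "j \<in> M"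
  shows "(\<Sum>k\<in>M. r k * q k j) = r j"
proof -
  have lim': "((\<lambda>a. abel_mean M \<nu> q a k) \<longlongrightarrow> r k) (at_right 0)" if "k \<in> M" for k
    using lim[OF that] by (simp add: rho_tendsto_def abel_mean_def markov_distr_def)
  have "((\<lambda>a. (1 - a) * (\<Sum>k\<in>M. abel_mean M \<nu> q a k * q k j) + a * \<nu> j)
          \<longlongrightarrow> (1 - 0) * (\<Sum>k\<in>M. r k * q k j) + 0 * \<nu> j) (at_right 0)"
    by (intro tendsto_intros lim') auto
  moreover have "eventually (\<lambda>a. (1 - a) * (\<Sum>k\<in>M. abel_mean M \<nu> q a k * q k j) + a * \<nu> j
                   = abel_mean M \<nu> q a j) (at_right (0::real))"
    unfolding eventually_at_right[OF zero_less_one]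
    using abel_mean_recurrence[OF _ _ \<open>j \<in> M\<close>] by (intro exI[of _ 1]) auto
  ultimately have "((\<lambda>a. abel_mean M \<nu> q a j) \<longlongrightarrow> (\<Sum>k\<in>M. r k * q k j)) (at_right 0)"
    using tendsto_cong by fastforce
  then show ?thesis using tendsto_unique[OF trivial_limit_at_right_real _ lim'[OF \<open>j \<in> M\<close>]] by blast
qed

end

lemma cycle_pairs_Cons:
  "cycle_pairs (x # ys) = set (zip (x # ys) (ys @ [x]))"
proof -
  have "(ys @ [x]) ! k = (x # ys) ! ((k + 1) mod length (x # ys))" if "k \<le> length ys" for k
    using that by (cases "k = length ys") (auto simp: nth_append)
  then show ?thesis
    by (auto simp: cycle_pairs_def set_zip less_Suc_eq_le)
qed

lemma cycle_pairs_subset: "cycle_pairs xs \<subseteq> set xs \<times> set xs"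
  by (auto simp: cycle_pairs_def intro!: nth_mem mod_less_divisor)

lemma fst_cycle_pairs_Cons: "fst ` cycle_pairs (x # ys) = set (x # ys)"
  unfolding cycle_pairs_Cons set_map[symmetric] by simp

lemma rtrancl_path_zip_snoc:
  "rtrancl_path r x ys y \<Longrightarrow> set (zip (x # ys) (ys @ [z])) = insert (y, z) (set (zip (x # ys) ys))"
  by (induction rule: rtrancl_path.induct) auto

lemma rtrancl_path_zip_edges:
  "rtrancl_path r x ys y \<Longrightarrow> \<forall>(a, b)\<in>set (zip (x # ys) ys). r a b"
  by (induction rule: rtrancl_path.induct) auto

lemma rtrancl_path_closes_cycle:
  assumes "rtrancl_path r x ys y" and "r y x"
  shows "(y, x) \<in> cycle_pairs (x # ys)" and "\<forall>(a, b)\<in>cycle_pairs (x # ys). r a b"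
  using rtrancl_path_zip_snoc[OF assms(1), of x] rtrancl_path_zip_edges[OF assms(1)] assms(2)
  by (auto simp: cycle_pairs_Cons)

lemma circulation_cut_zero:
  fixes g :: "'a \<Rightarrow> 'a \<Rightarrow> real"
  assumes "finite M" "R \<subseteq> M"
    and antisym: "\<And>k l. k \<in> M \<Longrightarrow> l \<in> M \<Longrightarrow> g l k = - g k l"
    and conserv: "\<And>k. k \<in> M \<Longrightarrow> (\<Sum>l\<in>M. g k l) = 0"
  shows "(\<Sum>k\<in>R. \<Sum>l\<in>M - R. g k l) = 0"
proof -
  have inner: "(\<Sum>k\<in>R. \<Sum>l\<in>R. g k l) = 0"
  proof -
    have "(\<Sum>k\<in>R. \<Sum>l\<in>R. g k l) = (\<Sum>l\<in>R. \<Sum>k\<in>R. g k l)" by (rule sum.swap)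
    also have "\<dots> = - (\<Sum>l\<in>R. \<Sum>k\<in>R. g l k)"
      using assms(2) antisym by (auto simp: sum_negf[symmetric] intro!: sum.cong)
    finally show ?thesis by simp
  qed
  have "(\<Sum>k\<in>R. \<Sum>l\<in>M. g k l) = 0" using assms(2) conserv by (simp add: subset_iff)
  moreover have "(\<Sum>k\<in>R. \<Sum>l\<in>M. g k l) = (\<Sum>k\<in>R. \<Sum>l\<in>M - R. g k l) + (\<Sum>k\<in>R. \<Sum>l\<in>R. g k l)"
    by (simp add: sum.subset_diff[OF assms(2,1)] sum.distrib)
  ultimately show ?thesis using inner by simp
qed

lemma circulation_positive_edge_returns:
  fixes g :: "'a \<Rightarrow> 'a \<Rightarrow> real"
  assumes "finite M" "i \<in> M" "j \<in> M"
    and antisym: "\<And>k l. k \<in> M \<Longrightarrow> l \<in> M \<Longrightarrow> g l k = - g k l"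
    and conserv: "\<And>k. k \<in> M \<Longrightarrow> (\<Sum>l\<in>M. g k l) = 0"
    and "0 < g i j"
  shows "(\<lambda>k l. k \<in> M \<and> l \<in> M \<and> 0 < g k l)\<^sup>*\<^sup>* j i"
proof -
  define r where "r = (\<lambda>k l. k \<in> M \<and> l \<in> M \<and> 0 < g k l)"
  define R where "R = {k. r\<^sup>*\<^sup>* j k}"
  have RM: "R \<subseteq> M"
  proof
    fix k assume "k \<in> R"
    then have "r\<^sup>*\<^sup>* j k" by (simp add: R_def)
    then show "k \<in> M" by (induction rule: rtranclp_induct) (auto simp: r_def \<open>j \<in> M\<close>)
  qed
  have "j \<in> R" by (simp add: R_def)
  have "i \<in> R"
  proof (rule ccontr)
    assume "i \<notin> R"
    have out_nonpos: "g k l \<le> 0" if "k \<in> R" "l \<in> M - R" for k l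
    proof (rule ccontr)
      assume "\<not> g k l \<le> 0"
      then have "r k l" using that RM by (auto simp: r_def)
      with \<open>k \<in> R\<close> have "l \<in> R" by (simp add: R_def rtranclp.rtrancl_into_rtrancl)
      with that show False by simp
    qed
    text \<open>The flow out of \<open>R\<close> vanishes, yet it is \<open>\<le> 0\<close> on every edge and \<open>< 0\<close> on \<open>(j, i)\<close>.\<close>
    have "(\<Sum>(k, l)\<in>R \<times> (M - R). g k l) < (\<Sum>(k, l)\<in>R \<times> (M - R). 0)"
    proof (rule sum_strict_mono_ex1)
      show "finite (R \<times> (M - R))" using assms(1) RM finite_subset by blast
      show "\<forall>x\<in>R \<times> (M - R). (case x of (k, l) \<Rightarrow> g k l) \<le> (case x of (k, l) \<Rightarrow> 0)"
        using out_nonpos by auto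
      have "g j i < 0" using antisym[OF \<open>i \<in> M\<close> \<open>j \<in> M\<close>] \<open>0 < g i j\<close> by simp
      then show "\<exists>x\<in>R \<times> (M - R). (case x of (k, l) \<Rightarrow> g k l) < (case x of (k, l) \<Rightarrow> 0)"
        using \<open>i \<notin> R\<close> \<open>i \<in> M\<close> \<open>j \<in> R\<close> by (intro bexI[of _ "(j, i)"]) simp_all
    qed
    then show False
      using circulation_cut_zero[OF assms(1) RM antisym conserv]
      by (simp add: sum.cartesian_product)
  qed
  then show ?thesis by (simp add: R_def r_def)
qed

lemma circulation_positive_edge_on_cycle:
  fixes g :: "'a \<Rightarrow> 'a \<Rightarrow> real"
  assumes "finite M" "i \<in> M" "j \<in> M"
    and antisym: "\<And>k l. k \<in> M \<Longrightarrow> l \<in> M \<Longrightarrow> g l k = - g k l"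
    and conserv: "\<And>k. k \<in> M \<Longrightarrow> (\<Sum>l\<in>M. g k l) = 0"
    and "0 < g i j"
  obtains xs where "distinct xs" "set xs \<subseteq> M" "(i, j) \<in> cycle_pairs xs"
    "\<forall>(k, l)\<in>cycle_pairs xs. 0 < g k l"
proof -
  let ?r = "\<lambda>k l. k \<in> M \<and> l \<in> M \<and> 0 < g k l"
  obtain zs where "rtrancl_path ?r j zs i"
    using circulation_positive_edge_returns[OF assms] unfolding rtranclp_eq_rtrancl_path by blast
  then obtain ys where path: "rtrancl_path ?r j ys i" and "distinct (j # ys)"
    by (rule rtrancl_path_distinct)
  have "?r i j" using \<open>i \<in> M\<close> \<open>j \<in> M\<close> \<open>0 < g i j\<close> by simp
  note cycle = rtrancl_path_closes_cycle[OF path this]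
  have "set (j # ys) \<subseteq> M"
  proof
    fix k assume "k \<in> set (j # ys)"
    then obtain l where "(k, l) \<in> cycle_pairs (j # ys)"
      unfolding fst_cycle_pairs_Cons[symmetric] by force
    with cycle(2) show "k \<in> M" by auto
  qed
  moreover have "\<forall>(k, l)\<in>cycle_pairs (j # ys). 0 < g k l" using cycle(2) by auto
  ultimately show thesis using that \<open>distinct (j # ys)\<close> cycle(1) by blast
qed

lemma MSC_markov_chain:
  assumes "finite X" "MSC X Q \<nu>" "N \<in> menus X"
  shows "markov_chain N (Q N) (\<nu> N)"
proof
  show fin: "finite N" using assms(1,3) finite_subset by (auto simp: menus_def)
  show "0 \<le> Q N k l" if "k \<in> N" "l \<in> N" for k l using assms(2,3) that by (simp add: MSC_def)
  show "0 \<le> \<nu> N i" if "i \<in> N" for i using assms(2,3) that by (simp add: MSC_def)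
  show "(\<Sum>i\<in>N. \<nu> N i) = 1" using assms(2,3) by (simp add: MSC_def)
  show "(\<Sum>l\<in>N. Q N k l) = 1" if "k \<in> N" for k
    using assms(2,3) that sum.remove[OF fin that, of "Q N k"] by (simp add: MSC_def)
qed

lemma rationalized_choice_stationary:
  assumes "finite X" "MSC X Q \<nu>" "rationalizes X p Q \<nu>" "N \<in> menus X" "l \<in> N"
  shows "(\<Sum>k\<in>N. p k N * Q N k l) = p l N"
  using markov_chain.abel_limit_stationary[OF MSC_markov_chain[OF assms(1,2,4)] _ assms(5)]
    assms(3,4) by (simp add: rationalizes_def)

lemma balanced_flow_factor:
  fixes a b x y u v Pk Pl :: real
  assumes "a * y = b * x" "u * a = v * b" "u + v = 1" "0 < a + b"
  shows "Pk * x - Pl * y = (x + y) * (Pk * v - u * Pl)"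
proof -
  have "(a + b) * (Pk * x - Pl * y) = (a + b) * ((x + y) * (Pk * v - u * Pl))"
    using assms(1-3) by algebra
  then show ?thesis using assms(4) by simp
qed

lemma binary_menu_balance:
  assumes "finite X" "MSC X Q \<nu>" "rationalizes X p Q \<nu>" "{k, l} \<in> menus X" "k \<noteq> l"
  shows "p k {k, l} * Q {k, l} k l = p l {k, l} * Q {k, l} l k"
proof -
  let ?N = "{k, l}"
  have "p k ?N * Q ?N k l + p l ?N * Q ?N l l = p l ?N"
    using rationalized_choice_stationary[OF assms(1-4), of l] assms(5) by simp
  moreover have "Q ?N l l = 1 - Q ?N l k"
    using markov_chain.transition_row_sum[OF MSC_markov_chain[OF assms(1,2,4)], of l] assms(5)
    by simp
  ultimately show ?thesis by (simp add: right_diff_distrib)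
qed

lemma MSC_net_flow:
  assumes "finite X" "stoch_choice X p" "MSC X Q \<nu>" "rationalizes X p Q \<nu>"
    and "M \<in> menus X" "k \<in> M" "l \<in> M"
  shows "p k M * Q M k l - p l M * Q M l k = (Q M k l + Q M l k) * delta p M k l"
proof (cases "k = l")
  case True
  then show ?thesis by (simp add: delta_def)
next
  case False
  let ?N = "{k, l}"
  have N: "?N \<in> menus X" using assms(5-7) by (auto simp: menus_def)
  have A2: "Q ?N k l = 0 \<longrightarrow> Q ?N l k > 0" and A3: "Q ?N k l * Q M l k = Q ?N l k * Q M k l"
    using assms(3,5-7) False unfolding MSC_def by blast+
  have "0 \<le> Q ?N k l" "0 \<le> Q ?N l k"
    using markov_chain.transition_nonneg[OF MSC_markov_chain[OF assms(1,3) N]] by auto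
  with A2 have "0 < Q ?N k l + Q ?N l k" by (cases "Q ?N k l = 0") auto
  moreover have "p k ?N + p l ?N = 1"
  proof -
    have "(\<Sum>i\<in>?N. p i ?N) = 1" using assms(2) N by (simp add: stoch_choice_def)
    then show ?thesis using False by simp
  qed
  ultimately show ?thesis
    using balanced_flow_factor[of "Q ?N k l" "Q M l k" "Q ?N l k" "Q M k l" "p k ?N" "p l ?N"]
      A3 binary_menu_balance[OF assms(1,3,4) N False]
    by (simp add: delta_def)
qed

lemma MSC_net_flow_conservation:
  assumes "finite X" "MSC X Q \<nu>" "rationalizes X p Q \<nu>" "M \<in> menus X" "k \<in> M"
  shows "(\<Sum>l\<in>M. p k M * Q M k l - p l M * Q M l k) = 0"
proof -
  have "(\<Sum>l\<in>M. p k M * Q M k l) = p k M"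
    using markov_chain.transition_row_sum[OF MSC_markov_chain[OF assms(1,2,4)] assms(5)]
    by (simp flip: sum_distrib_left)
  then show ?thesis
    using rationalized_choice_stationary[OF assms] by (simp add: sum_subtractf)
qed

lemma bounded_in_cycleI:
  assumes "distinct xs" "set xs \<subseteq> M" "(i, j) \<in> cycle_pairs xs"
    and sign: "\<forall>(k, l)\<in>cycle_pairs xs. 0 < sgn (delta p M i j) * delta p M k l"
  shows "bounded_in_cycle p M i j"
proof -
  have "xs \<noteq> []" using assms(3) by (auto simp: cycle_pairs_def)
  have "(\<forall>(k, l)\<in>cycle_pairs xs. 0 < delta p M k l) \<or> (\<forall>(k, l)\<in>cycle_pairs xs. delta p M k l < 0)"
  proof (cases "0 < delta p M i j")
    case True
    then show ?thesis using sign by auto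
  next
    case False
    then have "sgn (delta p M i j) \<in> {0, -1}" by (auto simp: sgn_if)
    then show ?thesis using sign by auto
  qed
  then show ?thesis
    unfolding bounded_in_cycle_def using assms(1-3) \<open>xs \<noteq> []\<close> by blast
qed

theorem proposition3:
  fixes X :: "'a set" and p :: "'a \<Rightarrow> 'a set \<Rightarrow> real" and M :: "'a set" and i j :: 'a
  assumes "finite X"
    and "stoch_choice X p"
    and "M \<in> menus X"
    and "i \<in> M" and "j \<in> M" and "i \<noteq> j"
    and "\<not> bounded_in_cycle p M i j"
  shows "\<forall>Q \<nu>. MSC X Q \<nu> \<and> rationalizes X p Q \<nu> \<longrightarrow> Q M i j = 0"
proof (intro allI impI)
  fix Q \<nu> assume "MSC X Q \<nu> \<and> rationalizes X p Q \<nu>"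
  then have msc: "MSC X Q \<nu>" and rat: "rationalizes X p Q \<nu>" by auto
  interpret markov_chain M "Q M" "\<nu> M" using MSC_markov_chain[OF assms(1) msc assms(3)] .
  define s where "s = sgn (delta p M i j)"
  define g where "g k l = s * (p k M * Q M k l - p l M * Q M l k)" for k l
  have g_eq: "g k l = (Q M k l + Q M l k) * (s * delta p M k l)" if "k \<in> M" "l \<in> M" for k l
    using MSC_net_flow[OF assms(1,2) msc rat assms(3) that] by (simp add: g_def)
  have g_antisym: "g l k = - g k l" for k l by (simp add: g_def algebra_simps)
  have g_conserv: "(\<Sum>l\<in>M. g k l) = 0" if "k \<in> M" for k
    using MSC_net_flow_conservation[OF assms(1) msc rat assms(3) that]
    by (simp add: g_def flip: sum_distrib_left)
  have sign: "0 < s * delta p M k l" if "k \<in> M" "l \<in> M" "0 < g k l" for k l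
    using that g_eq transition_nonneg by (metis add_nonneg_nonneg mult_nonneg_nonpos not_le)
  show "Q M i j = 0"
  proof (rule ccontr)
    assume "Q M i j \<noteq> 0"
    moreover have "delta p M i j \<noteq> 0" using assms(7) by (simp add: bounded_in_cycle_def)
    ultimately have g_pos: "0 < g i j"
      using assms(4,5) transition_nonneg
      by (simp add: g_eq s_def sgn_if add_pos_nonneg order_neq_le_trans)
    obtain xs where xs: "distinct xs" "set xs \<subseteq> M" "(i, j) \<in> cycle_pairs xs"
      and positive: "\<forall>(k, l)\<in>cycle_pairs xs. 0 < g k l"
      by (rule circulation_positive_edge_on_cycle[OF finite_states assms(4,5) g_antisym g_conserv g_pos])
    have "\<forall>(k, l)\<in>cycle_pairs xs. 0 < s * delta p M k l"
      using positive sign cycle_pairs_subset xs(2) by blast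
    then have "bounded_in_cycle p M i j" using bounded_in_cycleI xs by (simp add: s_def)
    with assms(7) show False ..
  qed
qed

end
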